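(* Let $d \geq 2$, $N, K \geq 1$ be integers, $\mathbf{y}_1,\ldots,\mathbf{y}_N \in \mathbb{R}^d$ with matrix $\mathbf{Y} = [\mathbf{y}_1,\ldots,\mathbf{y}_N]$, and $\rho_k^{[i]} \geq 0$ with $\sum_{k=1}^K \rho_k^{[i]} = 1$ for each $i$. Put $\mathbf{A}_k = \sum_{i} \rho_k^{[i]}\mathbf{y}_i\mathbf{y}_i^\mathrm{T}$, $\gamma_k = \sum_i \rho_k^{[i]}$, $\lambda_k = $ largest eigenvalue of $\mathbf{A}_k$, and assume $\gamma_k > 0$ for all $k$. For $S\subseteq[K]$ let $\sigma^2(S) = \big(\|\mathbf{Y}\|_\mathrm{F}^2 - \sum_{k\in S}\lambda_k\big)/\big(dN - \sum_{k\in S}\gamma_k\big)$ and $\mathcal{V} = \{S \subseteq [K] : \sigma^2(S) \leq \lambda_k/\gamma_k \text{ for all } k\in S\}$. Call $S$ saturated if $S \in \mathcal{V}$ and $\sigma^2(S) > \lambda_j/\gamma_j$ for all $j\in[K]\setminus S$. Then there exists a unique saturated set.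
   Context: $[K] = \{1,\ldots,K\}$; $\|\cdot\|_\mathrm{F}$ is the Frobenius norm. *)

theory Defs
  imports "HOL-Analysis.Analysis"
begin

definition is_eigenvalue :: "real^'n^'n \<Rightarrow> real \<Rightarrow> bool" where
  "is_eigenvalue A l \<longleftrightarrow> (\<exists>v. v \<noteq> 0 \<and> A *v v = l *\<^sub>R v)"

definition largest_eigenvalue :: "real^'n^'n \<Rightarrow> real" where
  "largest_eigenvalue A = Max {l. is_eigenvalue A l}"

definition outer :: "real^'n \<Rightarrow> real^'n^'n" where
  "outer y = (\<chi> a b. y $ a * y $ b)"

definition frob_sq :: "nat \<Rightarrow> (nat \<Rightarrow> real^'n) \<Rightarrow> real" where
  "frob_sq N y = (\<Sum>i\<in>{1..N}. \<Sum>a\<in>UNIV. (y i $ a)^2)"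

definition A_mat :: "nat \<Rightarrow> (nat \<Rightarrow> real^'n) \<Rightarrow> (nat \<Rightarrow> nat \<Rightarrow> real) \<Rightarrow> nat \<Rightarrow> real^'n^'n" where
  "A_mat N y \<rho> k = (\<Sum>i\<in>{1..N}. \<rho> k i *\<^sub>R outer (y i))"

definition gam :: "nat \<Rightarrow> (nat \<Rightarrow> nat \<Rightarrow> real) \<Rightarrow> nat \<Rightarrow> real" where
  "gam N \<rho> k = (\<Sum>i\<in>{1..N}. \<rho> k i)"

definition lam :: "nat \<Rightarrow> (nat \<Rightarrow> real^'n) \<Rightarrow> (nat \<Rightarrow> nat \<Rightarrow> real) \<Rightarrow> nat \<Rightarrow> real" where
  "lam N y \<rho> k = largest_eigenvalue (A_mat N y \<rho> k)"

definition sigma2 :: "nat \<Rightarrow> (nat \<Rightarrow> real^'n) \<Rightarrow> (nat \<Rightarrow> nat \<Rightarrow> real) \<Rightarrow> nat set \<Rightarrow> real" where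
  "sigma2 N y \<rho> S =
     (frob_sq N y - (\<Sum>k\<in>S. lam N y \<rho> k)) /
     (real CARD('n) * real N - (\<Sum>k\<in>S. gam N \<rho> k))"

definition Vset :: "nat \<Rightarrow> nat \<Rightarrow> (nat \<Rightarrow> real^'n) \<Rightarrow> (nat \<Rightarrow> nat \<Rightarrow> real) \<Rightarrow> nat set set" where
  "Vset K N y \<rho> = {S. S \<subseteq> {1..K} \<and>
      (\<forall>k\<in>S. sigma2 N y \<rho> S \<le> lam N y \<rho> k / gam N \<rho> k)}"

definition saturated :: "nat \<Rightarrow> nat \<Rightarrow> (nat \<Rightarrow> real^'n) \<Rightarrow> (nat \<Rightarrow> nat \<Rightarrow> real) \<Rightarrow> nat set \<Rightarrow> bool" where
  "saturated K N y \<rho> S \<longleftrightarrow> S \<in> Vset K N y \<rho> \<and>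
      (\<forall>j\<in>{1..K} - S. sigma2 N y \<rho> S > lam N y \<rho> j / gam N \<rho> j)"

end

theory Submission
  imports Defs
begin

text \<open>
  Only the numbers \<open>\<lambda>\<^sub>k\<close>, \<open>\<gamma>\<^sub>k > 0\<close> and the fact that \<open>\<Sum>\<^sub>k \<gamma>\<^sub>k = N < dN\<close> matter. Adding a block \<open>B\<close> to \<open>S\<close> makes \<open>\<sigma>\<^sup>2(S)\<close> a mediant of
  \<open>\<sigma>\<^sup>2(S \<union> B)\<close> and \<open>(\<Sum>\<^sub>B \<lambda>)/(\<Sum>\<^sub>B \<gamma>)\<close>. Hence a saturated set is an upper set for the
  ratios \<open>\<lambda>\<^sub>k/\<gamma>\<^sub>k\<close>, so two of them are nested, and a strictly larger one would have a strictly
  larger \<open>\<sigma>\<^sup>2\<close>, contradicting saturation. For existence, an index \<open>j\<close> violating saturation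
  of a set in \<open>\<V>\<close> can be added to it without leaving \<open>\<V>\<close>, so any inclusion-maximal element
  of \<open>\<V>\<close> (which contains \<open>{}\<close>) is saturated.
\<close>

lemma mediant_le_iff:
  fixes a b c d :: "'a::linordered_field"
  assumes "b > 0" "d > 0"
  shows mediant_le_right_iff: "(a + c) / (b + d) \<le> c / d \<longleftrightarrow> a / b \<le> c / d"
    and mediant_ge_left_iff: "a / b \<le> (a + c) / (b + d) \<longleftrightarrow> a / b \<le> c / d"
  using assms by (simp_all add: field_simps add_pos_pos)

lemma mediant_less_iff:
  fixes a b c d :: "'a::linordered_field"
  assumes "b > 0" "d > 0"
  shows mediant_gt_right_iff: "c / d < (a + c) / (b + d) \<longleftrightarrow> c / d < a / b"
    and mediant_less_left_iff: "(a + c) / (b + d) < a / b \<longleftrightarrow> c / d < a / b"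
  using assms by (simp_all add: field_simps add_pos_pos)

lemma sum_divide_sum_less:
  fixes f g :: "'a \<Rightarrow> 'b::linordered_field"
  assumes "finite B" "B \<noteq> {}" "\<And>j. j \<in> B \<Longrightarrow> g j > 0" "\<And>j. j \<in> B \<Longrightarrow> f j / g j < s"
  shows "sum f B / sum g B < s"
proof -
  have "sum f B < sum (\<lambda>j. s * g j) B"
    using assms by (intro sum_strict_mono) (auto simp: pos_divide_less_eq)
  moreover have "sum g B > 0"
    using assms by (intro sum_pos) auto
  ultimately show ?thesis
    by (simp add: pos_divide_less_eq sum_distrib_left)
qed

locale saturation =
  fixes I :: "'a set" and l g :: "'a \<Rightarrow> real" and T D :: real
  assumes finite_I: "finite I"
    and g_pos: "\<And>k. k \<in> I \<Longrightarrow> g k > 0"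
    and sum_g_less: "sum g I < D"
begin

definition sigma :: "'a set \<Rightarrow> real" where
  "sigma S = (T - sum l S) / (D - sum g S)"

definition feasible :: "'a set \<Rightarrow> bool" where
  "feasible S \<longleftrightarrow> S \<subseteq> I \<and> (\<forall>k\<in>S. sigma S \<le> l k / g k)"

definition saturating :: "'a set \<Rightarrow> bool" where
  "saturating S \<longleftrightarrow> feasible S \<and> (\<forall>j\<in>I - S. l j / g j < sigma S)"

lemma denominator_pos:
  assumes "S \<subseteq> I"
  shows "D - sum g S > 0"
proof -
  have "sum g S \<le> sum g I"
    using assms finite_I g_pos by (intro sum_mono2) (auto intro: less_imp_le)
  with sum_g_less show ?thesis by simp
qed

lemma sigma_as_mediant:
  assumes "S \<union> B \<subseteq> I" "S \<inter> B = {}"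
  shows "sigma S = ((T - sum l (S \<union> B)) + sum l B) / ((D - sum g (S \<union> B)) + sum g B)"
proof -
  have "finite S" "finite B"
    using assms(1) finite_I finite_subset by auto
  with assms(2) show ?thesis
    by (simp add: sigma_def sum.union_disjoint)
qed

lemma sum_g_pos:
  assumes "B \<subseteq> I" "B \<noteq> {}"
  shows "sum g B > 0"
  using assms finite_I finite_subset g_pos by (intro sum_pos) auto

lemma sigma_insert_le:
  assumes "S \<subseteq> I" "m \<in> I - S" "sigma S \<le> l m / g m"
  shows "sigma (insert m S) \<le> sigma S" and "sigma (insert m S) \<le> l m / g m"
proof -
  have split: "sigma S = ((T - sum l (S \<union> {m})) + l m) / ((D - sum g (S \<union> {m})) + g m)"
    using sigma_as_mediant[of S "{m}"] assms(1,2) by simp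
  have pos: "D - sum g (S \<union> {m}) > 0" "g m > 0"
    using assms(1,2) denominator_pos g_pos by auto
  have "sigma (insert m S) \<le> l m / g m"
    using assms(3) mediant_le_right_iff[OF pos] by (simp add: split sigma_def[of "insert m S"])
  then show "sigma (insert m S) \<le> l m / g m" "sigma (insert m S) \<le> sigma S"
    using mediant_ge_left_iff[OF pos] by (simp_all add: split sigma_def[of "insert m S"])
qed

lemma sigma_union_greater:
  assumes "S \<union> B \<subseteq> I" "S \<inter> B = {}" "B \<noteq> {}"
    and below: "\<And>j. j \<in> B \<Longrightarrow> l j / g j < sigma S"
  shows "sigma S < sigma (S \<union> B)"
proof -
  have pos: "D - sum g (S \<union> B) > 0" "sum g B > 0"
    using assms(1,3) denominator_pos sum_g_pos by auto
  have "sum l B / sum g B < sigma S"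
    using assms(1,3) below finite_I finite_subset g_pos by (intro sum_divide_sum_less) auto
  then show ?thesis
    using mediant_gt_right_iff[OF pos] mediant_less_left_iff[OF pos]
    by (simp add: sigma_as_mediant[OF assms(1,2)] sigma_def[of "S \<union> B"])
qed

lemma feasible_insert:
  assumes "feasible S" "m \<in> I - S" "sigma S \<le> l m / g m"
  shows "feasible (insert m S)"
  using assms sigma_insert_le[of S m] by (force simp: feasible_def)

lemma saturating_if_maximal:
  assumes "feasible S" and maximal: "\<And>S'. feasible S' \<Longrightarrow> S \<subseteq> S' \<Longrightarrow> S' = S"
  shows "saturating S"
  unfolding saturating_def
proof (intro conjI ballI assms(1))
  fix j assume j: "j \<in> I - S"
  show "l j / g j < sigma S"
  proof (rule ccontr)
    assume "\<not> l j / g j < sigma S"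
    then have "feasible (insert j S)"
      using feasible_insert[OF assms(1) j] by simp
    with maximal j show False by auto
  qed
qed

lemma saturating_exists: "\<exists>S. saturating S"
proof -
  have "finite {S. feasible S}"
    using finite_I by (auto simp: feasible_def intro: finite_subset[of _ "Pow I"])
  moreover have "feasible {}"
    by (simp add: feasible_def)
  ultimately obtain S where "feasible S" "\<And>S'. feasible S' \<Longrightarrow> S \<subseteq> S' \<Longrightarrow> S' = S"
    using finite_has_maximal[of "{S. feasible S}"] by blast
  then show ?thesis
    using saturating_if_maximal by blast
qed

lemma saturating_nested:
  assumes "saturating S\<^sub>1" "saturating S\<^sub>2"
  shows "S\<^sub>1 \<subseteq> S\<^sub>2 \<or> S\<^sub>2 \<subseteq> S\<^sub>1"
proof (rule ccontr)
  assume "\<not> (S\<^sub>1 \<subseteq> S\<^sub>2 \<or> S\<^sub>2 \<subseteq> S\<^sub>1)"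
  then obtain k j where "k \<in> S\<^sub>1 - S\<^sub>2" "j \<in> S\<^sub>2 - S\<^sub>1"
    by blast
  with assms have "l j / g j < sigma S\<^sub>1" "sigma S\<^sub>1 \<le> l k / g k"
    and "l k / g k < sigma S\<^sub>2" "sigma S\<^sub>2 \<le> l j / g j"
    by (auto simp: saturating_def feasible_def)
  then show False by simp
qed

lemma saturating_subset_eq:
  assumes "saturating S\<^sub>1" "saturating S\<^sub>2" "S\<^sub>1 \<subseteq> S\<^sub>2"
  shows "S\<^sub>1 = S\<^sub>2"
proof (rule ccontr)
  assume "S\<^sub>1 \<noteq> S\<^sub>2"
  define B where "B = S\<^sub>2 - S\<^sub>1"
  have B: "S\<^sub>1 \<union> B = S\<^sub>2" "S\<^sub>1 \<inter> B = {}" "B \<noteq> {}" "S\<^sub>2 \<subseteq> I"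
    using assms \<open>S\<^sub>1 \<noteq> S\<^sub>2\<close> by (auto simp: B_def saturating_def feasible_def)
  have below: "l j / g j < sigma S\<^sub>1" if "j \<in> B" for j
    using assms(1) that B(4) by (auto simp: B_def saturating_def)
  have "sigma S\<^sub>1 < sigma S\<^sub>2"
    using sigma_union_greater[of S\<^sub>1 B] B below by simp
  moreover obtain j where "j \<in> B"
    using B(3) by blast
  moreover from this have "sigma S\<^sub>2 \<le> l j / g j"
    using assms(2) by (auto simp: B_def saturating_def feasible_def)
  ultimately show False
    using below[of j] by simp
qed

theorem ex1_saturating: "\<exists>!S. saturating S"
  using saturating_exists saturating_nested saturating_subset_eq by metis

end

theorem lemma5:
  fixes y :: "nat \<Rightarrow> real^'d" and \<rho> :: "nat \<Rightarrow> nat \<Rightarrow> real" and N K :: nat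
  assumes "CARD('d) \<ge> 2" and "N \<ge> 1" and "K \<ge> 1"
    and "\<And>k i. k \<in> {1..K} \<Longrightarrow> i \<in> {1..N} \<Longrightarrow> \<rho> k i \<ge> 0"
    and "\<And>i. i \<in> {1..N} \<Longrightarrow> (\<Sum>k\<in>{1..K}. \<rho> k i) = 1"
    and "\<And>k. k \<in> {1..K} \<Longrightarrow> gam N \<rho> k > 0"
  shows "\<exists>!S. saturated K N y \<rho> S"
proof -
  let ?D = "real CARD('d) * real N"
  have "sum (gam N \<rho>) {1..K} = (\<Sum>i\<in>{1..N}. \<Sum>k\<in>{1..K}. \<rho> k i)"
    unfolding gam_def by (rule sum.swap)
  also have "\<dots> = real N"
    using assms(5) by simp
  also have "\<dots> < ?D"
    using assms(1,2) by simp
  finally interpret saturation "{1..K}" "lam N y \<rho>" "gam N \<rho>" "frob_sq N y" ?D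
    using assms(6) by unfold_locales auto
  have "saturated K N y \<rho> S \<longleftrightarrow> saturating S" for S
    unfolding saturated_def Vset_def saturating_def feasible_def sigma_def sigma2_def by simp
  with ex1_saturating show ?thesis
    by simp
qed

end
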